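(* Let $m\ge 0$, let $v$ be a derangement of order $m$, and let $n\ge m$. Then the map ${\bf\Phi}=\phi_1\circ\phi_2\circ\cdots\circ\phi_n$ defined below is a bijection of $\mathrm{Sh}(0^{n-m}v)$ onto itself, and for every $w\in\mathrm{Sh}(0^{n-m}v)$, $$\mathrm{RISE}\,w=\mathrm{RISE}^\bullet\,{\bf\Phi}(w).$$
   Context: Words have nonnegative integer letters. For a word $w=x_1\cdots x_n$: $\mathrm{RISE}\,w=\{i:1\le i\le n,\ x_i\le x_{i+1}\}$ with the convention $x_{n+1}=+\infty$ (so $n\in\mathrm{RISE}\,w$). $\mathrm{Pos}\,w$ is the subword of positive letters of $w$. For a word $v$ of positive integers of length $m\le n$, $\mathrm{Sh}(0^{n-m}v)$ is the set of words of length $n$ having exactly $n-m$ letters equal to $0$ and with $\mathrm{Pos}\,w=v$. A derangement of order $m$ is a word $y_1\cdots y_m$ that is a permutation of $1,2,\dots,m$ with $y_i\neq i$ for all $i$. Excedance: let $v$ be a derangement of order $m$ and $w=x_1\cdots x_n\in\mathrm{Sh}(0^{n-m}v)$. For each position $k$ with $x_k>0$, let $\mathrm{red}(k)$ be the number of positive letters among $x_1,\dots,x_k$. The positive letter $x_k$ is excedent if $x_k>\mathrm{red}(k)$ and subexcedent if $x_k<\mathrm{red}(k)$ (one of these always holds). A letter is non-subexcedent if it is $0$ or excedent. The fictitious letters $x_0=x_{n+1}=+\infty$ are regarded as excedent (hence non-subexcedent). $\mathrm{RISE}^\bullet w$ is the set of $i$, $1\le i\le n$, such that one of the following holds: (1)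 $0<x_i<x_{i+1}$; (2) $x_i=x_{i+1}=0$; (3) $x_i=0$ and $x_{i+1}$ is excedent; (4) $x_i$ is subexcedent and $x_{i+1}=0$. The maps $\phi_l$ ($1\le l\le n$) on $\mathrm{Sh}(0^{n-m}v)$: if $l>n-m$, $\phi_l(w)=w$. If $1\le l\le n-m$, let $j$ be the position of the $l$-th letter equal to $0$ in $w$, read from left to right. (a) If $x_{j-1}$ and $x_{j+1}$ are both non-subexcedent, $\phi_l(w)=w$. (b) If $x_{j-1}$ is non-subexcedent and $x_{j+1}$ is subexcedent, or if both are subexcedent with $x_{j-1}>x_{j+1}$: let $k$ be the greatest integer $k\ge j+1$ with $x_{j+1}<x_{j+2}<\cdots<x_k<\mathrm{red}(k)$, and set $\phi_l(w)=x_1\cdots x_{j-1}\,x_{j+1}\cdots x_k\,0\,x_{k+1}\cdots x_n$. (c) If $x_{j-1}$ is subexcedent and $x_{j+1}$ is non-subexcedent, or if both are subexcedent with $x_{j-1}<x_{j+1}$: let $i$ be the smallest integer $i\le j-1$ with $\mathrm{red}(i)>x_i>x_{i+1}>\cdots>x_{j-1}$, and set $\phi_l(w)=x_1\cdots x_{i-1}\,0\,x_i\cdots x_{j-1}\,x_{j+1}\cdots x_n$. Finally ${\bf\Phi}(w)=\phi_1(\phi_2(\cdots\phi_n(w)\cdots))$. *)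

theory Defs
  imports Main "HOL-Library.Extended_Nat"
begin

text \<open>Words are lists of natural numbers; positions are 1-indexed as in the paper:
  the letter x_i of w is w ! (i - 1) for 1 <= i <= length w.\<close>

definition xl :: "nat list \<Rightarrow> nat \<Rightarrow> nat" where
  "xl w i = w ! (i - 1)"

text \<open>Letters with the fictitious letters x_0 = x_(n+1) = +infinity.\<close>
definition lt :: "nat list \<Rightarrow> nat \<Rightarrow> enat" where
  "lt w i = (if 1 \<le> i \<and> i \<le> length w then enat (w ! (i - 1)) else \<infinity>)"

definition Pos :: "nat list \<Rightarrow> nat list" where
  "Pos w = filter (\<lambda>a. 0 < a) w"

definition RISE :: "nat list \<Rightarrow> nat set" where
  "RISE w = {i. 1 \<le> i \<and> i \<le> length w \<and> lt w i \<le> lt w (i + 1)}"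

definition Sh :: "nat \<Rightarrow> nat \<Rightarrow> nat list \<Rightarrow> nat list set" where
  "Sh n m v = {w. length w = n \<and> length (filter (\<lambda>a. a = 0) w) = n - m \<and> Pos w = v}"

definition derangement :: "nat \<Rightarrow> nat list \<Rightarrow> bool" where
  "derangement m v \<longleftrightarrow> length v = m \<and> distinct v \<and> set v = {1..m}
      \<and> (\<forall>i. 1 \<le> i \<and> i \<le> m \<longrightarrow> v ! (i - 1) \<noteq> i)"

definition red :: "nat list \<Rightarrow> nat \<Rightarrow> nat" where
  "red w k = length (filter (\<lambda>a. 0 < a) (take k w))"

definition Subexc :: "nat list \<Rightarrow> nat \<Rightarrow> bool" where
  "Subexc w k \<longleftrightarrow> 1 \<le> k \<and> k \<le> length w \<and> 0 < xl w k \<and> xl w k < red w k"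

definition Exc :: "nat list \<Rightarrow> nat \<Rightarrow> bool" where
  "Exc w k \<longleftrightarrow> k = 0 \<or> k = length w + 1
      \<or> (1 \<le> k \<and> k \<le> length w \<and> 0 < xl w k \<and> red w k < xl w k)"

definition NonSub :: "nat list \<Rightarrow> nat \<Rightarrow> bool" where
  "NonSub w k \<longleftrightarrow> (1 \<le> k \<and> k \<le> length w \<and> xl w k = 0) \<or> Exc w k"

definition RISEb :: "nat list \<Rightarrow> nat set" where
  "RISEb w = {i. 1 \<le> i \<and> i \<le> length w \<and>
      ((0 < lt w i \<and> lt w i < lt w (i + 1))
     \<or> (lt w i = 0 \<and> lt w (i + 1) = 0)
     \<or> (lt w i = 0 \<and> Exc w (i + 1))
     \<or> (Subexc w i \<and> lt w (i + 1) = 0))}"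

text \<open>Position (1-indexed) of the l-th letter equal to 0 (l >= 1).\<close>
definition zpos :: "nat list \<Rightarrow> nat \<Rightarrow> nat" where
  "zpos w l = [j \<leftarrow> [1..<length w + 1]. w ! (j - 1) = 0] ! (l - 1)"

definition phi :: "nat \<Rightarrow> nat \<Rightarrow> nat list \<Rightarrow> nat list" where
  "phi m l w = (let n = length w in
     if l = 0 \<or> n - m < l then w else
     let j = zpos w l in
     if NonSub w (j - 1) \<and> NonSub w (j + 1) then w
     else if (NonSub w (j - 1) \<and> Subexc w (j + 1))
           \<or> (Subexc w (j - 1) \<and> Subexc w (j + 1) \<and> xl w (j + 1) < xl w (j - 1)) then
       (let k = (GREATEST k. j + 1 \<le> k \<and> k \<le> n
                   \<and> (\<forall>t. j + 1 \<le> t \<and> t < k \<longrightarrow> xl w t < xl w (t + 1))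
                   \<and> xl w k < red w k)
        in take (j - 1) w @ drop j (take k w) @ [0] @ drop k w)
     else if (Subexc w (j - 1) \<and> NonSub w (j + 1))
           \<or> (Subexc w (j - 1) \<and> Subexc w (j + 1) \<and> xl w (j - 1) < xl w (j + 1)) then
       (let i = (LEAST i. 1 \<le> i \<and> i \<le> j - 1 \<and> xl w i < red w i
                   \<and> (\<forall>t. i \<le> t \<and> t < j - 1 \<longrightarrow> xl w (t + 1) < xl w t))
        in take (i - 1) w @ [0] @ drop (i - 1) (take (j - 1) w) @ drop j w)
     else w)"

definition Phi :: "nat \<Rightarrow> nat \<Rightarrow> nat list \<Rightarrow> nat list" where
  "Phi n m w = foldr (phi m) [1..<n + 1] w"

end

(*
  The number red(k) of positive letters up to position k is the place in v of the letter x_k,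
  so whether a positive letter is excedent or subexcedent depends on the letter alone.
  For a level l, call a position a mixed rise if it is a rise when the zeros numbered below l
  are read with the rule of RISE and the remaining zeros with the rule of RISE*.  Level n + 1
  gives RISE and level 1 gives RISE*.  The map phi_l only moves the l-th zero across a maximal
  monotone run of positive letters, and comparing the few positions around the run shows that
  phi_l takes the mixed rises of level l + 1 of w to the mixed rises of level l of phi_l(w);
  composing the phi_l telescopes from RISE w to RISE* Phi(w).  Finally, the letters on both
  sides of the l-th zero of phi_l(w) reveal which case of the definition was applied and which
  run was crossed, so each phi_l is injective, and Phi, an injective self-map of a finite set,
  is a bijection.
*)

theory Submission
  imports Defs
begin

section \<open>Letters and their places in the derangement\<close>

text \<open>The 1-based position of the letter \<open>a\<close> in \<open>v\<close>; it is meaningless unless \<open>a \<in> set v\<close>.\<close>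

definition place :: "nat list \<Rightarrow> nat \<Rightarrow> nat" where
  "place v a = Suc (THE q. q < length v \<and> v ! q = a)"

definition subexc_letter :: "nat list \<Rightarrow> nat \<Rightarrow> bool" where
  "subexc_letter v a \<longleftrightarrow> 0 < a \<and> a < place v a"

definition exc_letter :: "nat list \<Rightarrow> nat \<Rightarrow> bool" where
  "exc_letter v a \<longleftrightarrow> 0 < a \<and> place v a < a"

lemma Pos_append [simp]: "Pos (xs @ ys) = Pos xs @ Pos ys"
  by (simp add: Pos_def)

lemma Pos_Nil [simp]: "Pos [] = []"
  by (simp add: Pos_def)

lemma Pos_Cons [simp]: "Pos (a # xs) = (if 0 < a then a # Pos xs else Pos xs)"
  by (simp add: Pos_def)

lemma count_list_zero_eq_length_filter: "count_list xs (0::nat) = length (filter (\<lambda>a. a = 0) xs)"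
  by (induct xs) auto

lemma place_eq:
  assumes "distinct v" "q < length v" "v ! q = a"
  shows "place v a = Suc q"
proof -
  have "(THE q. q < length v \<and> v ! q = a) = q"
    using assms by (intro the_equality) (auto simp: nth_eq_iff_index_eq)
  thus ?thesis by (simp add: place_def)
qed

lemma place_append:
  assumes "Pos u = v" "distinct v" "u = X @ a # Y" "0 < a"
  shows "place v a = Suc (length (Pos X))"
proof -
  have "v = Pos X @ a # Pos Y" using assms by simp
  thus ?thesis using assms(2) by (intro place_eq) (auto simp: nth_append)
qed

lemma place_next_positive:
  assumes "Pos u = v" "distinct v" "u = X @ a # Z @ b # Y" "0 < a" "0 < b" "Pos Z = []"
  shows "place v b = Suc (place v a)"
proof -
  have "u = (X @ a # Z) @ b # Y" using assms(3) by simp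
  from place_append[OF assms(1,2) this assms(5)] place_append[OF assms(1-4)] assms(4,6)
  show ?thesis by simp
qed

lemma place_hd_after_last:
  assumes "Pos u = v" "distinct v" "u = P @ X @ Z @ Y @ S" "X \<noteq> []" "Y \<noteq> []"
    "0 < last X" "0 < hd Y" "Pos Z = []"
  shows "place v (hd Y) = Suc (place v (last X))"
proof -
  have "u = (P @ butlast X) @ last X # Z @ hd Y # (tl Y @ S)" using assms(3-5) by simp
  thus ?thesis using place_next_positive[OF assms(1,2)] assms(6-8) by blast
qed

lemma red_eq_place:
  assumes "Pos u = v" "distinct v" "1 \<le> p" "p \<le> length u" "0 < u ! (p - 1)"
  shows "red u p = place v (u ! (p - 1))"
proof -
  have u: "u = take (p - 1) u @ u ! (p - 1) # drop p u"
    using assms id_take_nth_drop[of "p - 1" u] by simp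
  have "take p u = take (p - 1) u @ [u ! (p - 1)]"
    using assms take_Suc_conv_app_nth[of "p - 1" u] by simp
  thus ?thesis using place_append[OF assms(1,2) u assms(5)] assms(5)
    by (simp add: red_def Pos_def)
qed

lemma Subexc_iff_subexc_letter:
  assumes "Pos u = v" "distinct v"
  shows "Subexc u p \<longleftrightarrow> 1 \<le> p \<and> p \<le> length u \<and> subexc_letter v (u ! (p - 1))"
  using red_eq_place[OF assms] unfolding Subexc_def subexc_letter_def xl_def by auto

lemma Exc_iff_exc_letter:
  assumes "Pos u = v" "distinct v"
  shows "Exc u p \<longleftrightarrow> p = 0 \<or> p = Suc (length u)
           \<or> (1 \<le> p \<and> p \<le> length u \<and> exc_letter v (u ! (p - 1)))"
proof -
  have "red u p < u ! (p - 1) \<longleftrightarrow> place v (u ! (p - 1)) < u ! (p - 1)"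
    if "1 \<le> p" "p \<le> length u" "0 < u ! (p - 1)"
    using red_eq_place[OF assms that] by simp
  thus ?thesis unfolding Exc_def exc_letter_def xl_def by auto
qed

lemma subexc_letter_not_exc: "subexc_letter v a \<Longrightarrow> \<not> exc_letter v a"
  by (auto simp: subexc_letter_def exc_letter_def)

lemma exc_before_subexc:
  "place v b = Suc (place v a) \<Longrightarrow> exc_letter v a \<Longrightarrow> subexc_letter v b \<Longrightarrow> b < a"
  by (auto simp: subexc_letter_def exc_letter_def)

lemma subexc_before_exc:
  "place v b = Suc (place v a) \<Longrightarrow> subexc_letter v a \<Longrightarrow> exc_letter v b \<Longrightarrow> a < b"
  by (auto simp: subexc_letter_def exc_letter_def)

lemma derangement_letter_cases:
  assumes "derangement m v" "a \<in> set v"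
  shows "subexc_letter v a \<or> exc_letter v a"
proof -
  obtain q where q: "q < length v" "v ! q = a" using assms(2) by (auto simp: in_set_conv_nth)
  have v: "length v = m" "distinct v" "set v = {1..m}" "\<forall>i. 1 \<le> i \<and> i \<le> m \<longrightarrow> v ! (i - 1) \<noteq> i"
    using assms(1) unfolding derangement_def by auto
  have "a \<noteq> Suc q" using v(1,4) q by (metis diff_Suc_1 le_add1 less_eq_Suc_le plus_1_eq_Suc)
  moreover have "0 < a" using v(3) assms(2) by force
  ultimately show ?thesis using place_eq[OF v(2) q]
    unfolding subexc_letter_def exc_letter_def by auto
qed

text \<open>For an empty \<open>A\<close> (\<open>B\<close>) the neighbour of the zero is the fictitious excedent letter
  \<open>x\<^sub>0\<close> (\<open>x\<^sub>n\<^sub>+\<^sub>1\<close>), which is not subexcedent.\<close>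

definition subexc_last :: "nat list \<Rightarrow> nat list \<Rightarrow> bool" where
  "subexc_last v A \<longleftrightarrow> A \<noteq> [] \<and> subexc_letter v (last A)"

definition subexc_hd :: "nat list \<Rightarrow> nat list \<Rightarrow> bool" where
  "subexc_hd v B \<longleftrightarrow> B \<noteq> [] \<and> subexc_letter v (hd B)"

section \<open>Mixed rise sets\<close>

text \<open>The rise rule at a position \<open>i\<close> for level \<open>l\<close>: \<open>z\<close> is the number of zeros among
  \<open>x\<^sub>1 \<dots> x\<^sub>i\<close>, \<open>a = x\<^sub>i\<close> and \<open>b = x\<^sub>i\<^sub>+\<^sub>1\<close> (\<open>\<infinity>\<close> past the end). Zeros numbered below \<open>l\<close> are
  rises as in RISE, the other zeros follow RISE*, and a positive letter followed by a zero numbered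
  at least \<open>l\<close> is a rise iff it is subexcedent. Two adjacent positive letters are never equal, so
  \<open>a < b\<close> is the RISE condition for them.\<close>

definition mixed_rise_rule :: "nat list \<Rightarrow> nat \<Rightarrow> nat \<Rightarrow> nat \<Rightarrow> enat \<Rightarrow> bool" where
  "mixed_rise_rule v l z a b \<longleftrightarrow>
     (0 < a \<and> enat a < b)
   \<or> (a = 0 \<and> (z < l \<or> b = 0 \<or> b = \<infinity> \<or> (\<exists>x. b = enat x \<and> exc_letter v x)))
   \<or> (0 < a \<and> b = 0 \<and> l \<le> Suc z \<and> subexc_letter v a)"

definition mixed_rise :: "nat list \<Rightarrow> nat \<Rightarrow> nat list \<Rightarrow> nat \<Rightarrow> bool" where
  "mixed_rise v l w i \<longleftrightarrow>
     mixed_rise_rule v l (count_list (take i w) 0) (w ! (i - 1)) (lt w (Suc i))"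

definition RISE_mix :: "nat list \<Rightarrow> nat \<Rightarrow> nat list \<Rightarrow> nat set" where
  "RISE_mix v l w = {i. 1 \<le> i \<and> i \<le> length w \<and> mixed_rise v l w i}"

lemma lt_Suc: "lt w (Suc i) = (if i < length w then enat (w ! i) else \<infinity>)"
  by (auto simp: lt_def)

lemma lt_one: "lt w (Suc 0) = (if w = [] then \<infinity> else enat (hd w))"
  by (cases w) (auto simp: lt_def)

lemma count_list_take_le: "count_list (take i xs) x \<le> count_list xs x"
  by (metis append_take_drop_id count_list_append le_add1)

lemma count_list_take_Suc:
  "i < length xs \<Longrightarrow>
   count_list (take (Suc i) xs) x = count_list (take i xs) x + (if xs ! i = x then 1 else 0)"
  by (simp add: take_Suc_conv_app_nth)

lemma mixed_rise_rule_Suc: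
  assumes "a = 0 \<longrightarrow> z \<noteq> l" "0 < a \<and> b = 0 \<longrightarrow> Suc z \<noteq> l"
  shows "mixed_rise_rule v (Suc l) z a b = mixed_rise_rule v l z a b"
  using assms unfolding mixed_rise_rule_def by auto

lemma mixed_rise_Suc_off_level:
  assumes "i < length w \<longrightarrow> w ! i = 0 \<longrightarrow> Suc (count_list (take i w) 0) \<noteq> l"
    and "w ! (i - 1) = 0 \<longrightarrow> count_list (take i w) 0 \<noteq> l"
  shows "mixed_rise v (Suc l) w i = mixed_rise v l w i"
  unfolding mixed_rise_def using assms
  by (intro mixed_rise_rule_Suc) (auto simp: lt_Suc zero_enat_def)

lemma mixed_rise_append_right:
  assumes "1 \<le> i" "i < length A"
  shows "mixed_rise v l (A @ Y) i = mixed_rise v l (A @ Y') i"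
proof -
  have "i - 1 < length A" using assms by simp
  thus ?thesis using assms by (simp add: mixed_rise_def lt_Suc nth_append)
qed

lemma mixed_rise_append_left:
  assumes "length P = length P'" "count_list P 0 = count_list P' 0" "length P < i"
  shows "mixed_rise v l (P @ D) i = mixed_rise v l (P' @ D) i"
proof -
  have "\<not> i - 1 < length P'" "\<not> i < length P'" using assms by auto
  thus ?thesis using assms by (simp add: mixed_rise_def lt_Suc nth_append)
qed

lemma RISE_mix_Suc_beyond_zeros:
  assumes "count_list u 0 < l"
  shows "RISE_mix v (Suc l) u = RISE_mix v l u"
proof -
  have "mixed_rise v (Suc l) u i = mixed_rise v l u i" for i
  proof (rule mixed_rise_Suc_off_level)
    show "i < length u \<longrightarrow> u ! i = 0 \<longrightarrow> Suc (count_list (take i u) 0) \<noteq> l"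
      using count_list_take_Suc[of i u 0] count_list_take_le[of "Suc i" u 0] assms by auto
    show "u ! (i - 1) = 0 \<longrightarrow> count_list (take i u) 0 \<noteq> l"
      using count_list_take_le[of i u 0] assms by auto
  qed
  thus ?thesis by (simp add: RISE_mix_def)
qed

lemma mixed_rise_Suc_before_window:
  assumes A: "count_list A 0 = l - 1" "1 \<le> l" and i: "1 \<le> i" "i < length A"
  shows "mixed_rise v (Suc l) (A @ X) i = mixed_rise v l (A @ Y) i"
proof -
  have "mixed_rise v (Suc l) (A @ X) i = mixed_rise v l (A @ X) i"
  proof (rule mixed_rise_Suc_off_level)
    have "count_list (take (Suc i) (A @ X)) 0 \<le> l - 1"
      using i count_list_take_le[of "Suc i" A 0] A by simp
    thus "i < length (A @ X) \<longrightarrow> (A @ X) ! i = 0 \<longrightarrow> Suc (count_list (take i (A @ X)) 0) \<noteq> l"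
      using count_list_take_Suc[of i "A @ X" 0] A(2) by auto
    show "(A @ X) ! (i - 1) = 0 \<longrightarrow> count_list (take i (A @ X)) 0 \<noteq> l"
      using i count_list_take_le[of i A 0] A by auto
  qed
  also have "\<dots> = mixed_rise v l (A @ Y) i" using i by (rule mixed_rise_append_right)
  finally show ?thesis .
qed

lemma mixed_rise_Suc_after_window:
  assumes P: "length P = length P'" "count_list P 0 = l" "count_list P' 0 = l"
    and i: "length P < i" "i \<le> length P + length D"
  shows "mixed_rise v (Suc l) (P @ D) i = mixed_rise v l (P' @ D) i"
proof -
  let ?k = "i - 1 - length P"
  have k: "i - length P = Suc ?k" "?k < length D" using i by auto
  have "take i (P @ D) = P @ take (Suc ?k) D" using i k(1) by simp
  hence count: "count_list (take i (P @ D)) 0 = l + count_list (take (Suc ?k) D) 0"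
    using P(2) by simp
  have "mixed_rise v (Suc l) (P @ D) i = mixed_rise v l (P @ D) i"
  proof (rule mixed_rise_Suc_off_level)
    show "i < length (P @ D) \<longrightarrow> (P @ D) ! i = 0 \<longrightarrow> Suc (count_list (take i (P @ D)) 0) \<noteq> l"
      using count by auto
    have "D ! ?k \<in> set (take (Suc ?k) D)" using k(2) by (simp add: take_Suc_conv_app_nth)
    moreover have "(P @ D) ! (i - 1) = D ! ?k"
      using nth_append_right[of P "i - 1" D] i by simp
    ultimately show "(P @ D) ! (i - 1) = 0 \<longrightarrow> count_list (take i (P @ D)) 0 \<noteq> l"
      using count by (auto simp: count_list_0_iff)
  qed
  also have "\<dots> = mixed_rise v l (P' @ D) i" using P i by (intro mixed_rise_append_left) auto
  finally show ?thesis .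
qed

lemma mixed_rise_end_of_prefix:
  assumes "A \<noteq> []" "X \<noteq> []"
  shows "mixed_rise v l (A @ X @ D) (length A)
           = mixed_rise_rule v l (count_list A 0) (last A) (enat (hd X))"
  using assms by (simp add: mixed_rise_def lt_Suc nth_append last_conv_nth hd_conv_nth)

lemma mixed_rise_inside:
  assumes "1 \<le> j" "j \<le> length X"
  shows "mixed_rise v l (A @ X @ D) (length A + j)
           = mixed_rise_rule v l (count_list A 0 + count_list (take j X) 0) (X ! (j - 1))
               (if j < length X then enat (X ! j) else lt D 1)"
proof -
  have "length A + j - 1 = length A + (j - 1)" "j - 1 < length X" using assms by auto
  hence "(A @ X @ D) ! (length A + j - 1) = X ! (j - 1)"
    by (simp only: nth_append_length_plus nth_append) simp
  moreover have "take (length A + j) (A @ X @ D) = A @ take j X" using assms by simp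
  moreover have "lt (A @ X @ D) (Suc (length A + j)) = (if j < length X then enat (X ! j) else lt D 1)"
  proof -
    have "(A @ X @ D) ! (length A + j) = (X @ D) ! j" by (rule nth_append_length_plus)
    thus ?thesis using assms by (auto simp: lt_Suc lt_one nth_append hd_conv_nth)
  qed
  ultimately show ?thesis using assms by (simp add: mixed_rise_def)
qed

text \<open>Outside the window \<open>X\<close>, which contains the \<open>l\<close>-th zero, the level makes no difference:
  the zeros before it are numbered below \<open>l\<close>, those after it above \<open>l\<close>.\<close>

lemma RISE_mix_Suc_window:
  assumes A: "count_list A 0 = l - 1" "1 \<le> l"
    and XY: "length X = length Y" "count_list X 0 = 1" "count_list Y 0 = 1"
    and left: "A \<noteq> [] \<Longrightarrow> mixed_rise_rule v (Suc l) (l - 1) (last A) (enat (hd X))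
                             = mixed_rise_rule v l (l - 1) (last A) (enat (hd Y))"
    and inside: "\<And>j. 1 \<le> j \<Longrightarrow> j \<le> length X \<Longrightarrow>
      mixed_rise_rule v (Suc l) (l - 1 + count_list (take j X) 0) (X ! (j - 1))
        (if j < length X then enat (X ! j) else lt D 1)
      = mixed_rise_rule v l (l - 1 + count_list (take j Y) 0) (Y ! (j - 1))
        (if j < length Y then enat (Y ! j) else lt D 1)"
  shows "RISE_mix v (Suc l) (A @ X @ D) = RISE_mix v l (A @ Y @ D)"
proof -
  have X: "X \<noteq> []" "Y \<noteq> []" using XY by auto
  have "mixed_rise v (Suc l) (A @ X @ D) i = mixed_rise v l (A @ Y @ D) i"
    if i: "1 \<le> i" "i \<le> length A + length X + length D" for i
  proof -
    consider "i < length A" | "i = length A" | "length A < i" "i \<le> length A + length X"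
      | "length A + length X < i"
      by linarith
    thus ?thesis
    proof cases
      case 1
      thus ?thesis using mixed_rise_Suc_before_window[OF A i(1) 1] by simp
    next
      case 2
      hence "A \<noteq> []" using i by auto
      thus ?thesis using left 2 X A by (simp add: mixed_rise_end_of_prefix)
    next
      case 3
      define j where "j = i - length A"
      have j: "1 \<le> j" "j \<le> length X" "i = length A + j" using 3 by (auto simp: j_def)
      show ?thesis using inside[OF j(1,2)] mixed_rise_inside[OF j(1,2)]
        mixed_rise_inside[of j Y] j XY A by simp
    next
      case 4
      thus ?thesis using mixed_rise_Suc_after_window[of "A @ X" "A @ Y" l i D] A XY i by simp
    qed
  qed
  thus ?thesis using XY by (auto simp: RISE_mix_def)
qed

lemma RISE_mix_Suc_fixed_zero:
  assumes A: "count_list A 0 = l - 1" "1 \<le> l"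
    and L: "\<not> subexc_last v A" and R: "B = [] \<or> hd B = 0 \<or> exc_letter v (hd B)"
  shows "RISE_mix v (Suc l) (A @ [0] @ B) = RISE_mix v l (A @ [0] @ B)"
proof (rule RISE_mix_Suc_window[OF A])
  show "mixed_rise_rule v (Suc l) (l - 1) (last A) (enat (hd [0]))
      = mixed_rise_rule v l (l - 1) (last A) (enat (hd [0]))" if "A \<noteq> []"
    using L that A(2) by (auto simp: mixed_rise_rule_def subexc_last_def zero_enat_def)
  show "mixed_rise_rule v (Suc l) (l - 1 + count_list (take j [0]) 0) ([0] ! (j - 1))
          (if j < length [0] then enat ([0] ! j) else lt B 1)
      = mixed_rise_rule v l (l - 1 + count_list (take j [0]) 0) ([0] ! (j - 1))
          (if j < length [0] then enat ([0] ! j) else lt B 1)"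
    if "1 \<le> j" "j \<le> length [0::nat]" for j
    using that R A(2) by (auto simp: mixed_rise_rule_def lt_one zero_enat_def)
qed simp_all

lemma RISE_mix_Suc_move_right:
  assumes A: "count_list A 0 = l - 1" "1 \<le> l"
    and C: "C \<noteq> []" "0 \<notin> set C" "sorted_wrt (<) C" "subexc_letter v (last C)"
    and L: "A = [] \<or> last A = 0 \<or> hd C \<le> last A"
    and R: "D = [] \<or> hd D = 0 \<or> (last C < hd D \<longleftrightarrow> exc_letter v (hd D))"
  shows "RISE_mix v (Suc l) (A @ (0 # C) @ D) = RISE_mix v l (A @ (C @ [0]) @ D)"
proof (rule RISE_mix_Suc_window[OF A])
  have "0 < hd C" using C by (metis gr0I hd_in_set)
  thus "mixed_rise_rule v (Suc l) (l - 1) (last A) (enat (hd (0 # C)))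
      = mixed_rise_rule v l (l - 1) (last A) (enat (hd (C @ [0])))" if "A \<noteq> []"
    using L that A(2) C(1) by (auto simp: mixed_rise_rule_def zero_enat_def)
  fix j assume j: "1 \<le> j" "j \<le> length (0 # C)"
  have zeros: "count_list (take j (0 # C)) 0 = 1"
    using C(2) j(1) by (cases j) (auto simp: count_list_0_iff dest: in_set_takeD)
  have last_C: "last C = C ! (length C - 1)" using C(1) by (simp add: last_conv_nth)
  show "mixed_rise_rule v (Suc l) (l - 1 + count_list (take j (0 # C)) 0) ((0 # C) ! (j - 1))
          (if j < length (0 # C) then enat ((0 # C) ! j) else lt D 1)
      = mixed_rise_rule v l (l - 1 + count_list (take j (C @ [0])) 0) ((C @ [0]) ! (j - 1))
          (if j < length (C @ [0]) then enat ((C @ [0]) ! j) else lt D 1)"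
  proof (cases "j = Suc (length C)")
    case True
    have "(0 # C) ! (j - 1) = last C" "(C @ [0]) ! (j - 1) = 0"
      "count_list (take j (C @ [0])) 0 = 1" using True C(1,2) last_C by auto
    moreover have "0 < last C" using C(1,2) by (metis gr0I last_in_set)
    ultimately show ?thesis using True zeros R C(4) A(2)
      by (auto simp: mixed_rise_rule_def lt_one zero_enat_def)
  next
    case False
    hence j': "j \<le> length C" using j by simp
    have "C ! (j - 1) \<in> set C" using j j' by simp
    hence pos: "0 < C ! (j - 1)" using C(2) by (metis gr0I)
    have lhs: "mixed_rise_rule v (Suc l) l ((0 # C) ! (j - 1)) (enat ((0 # C) ! j))"
    proof (cases "j = 1")
      case False
      hence "C ! (j - 2) < C ! (j - 1)" using C(3) j j' by (simp add: sorted_wrt_nth_less)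
      moreover have "(0 # C) ! (j - 1) = C ! (j - 2)" "(0 # C) ! j = C ! (j - 1)"
        using False j by (auto simp: nth_Cons' numeral_2_eq_2)
      ultimately show ?thesis by (auto simp: mixed_rise_rule_def)
    qed (simp add: mixed_rise_rule_def)
    have rhs: "mixed_rise_rule v l (l - 1) (C ! (j - 1)) (enat ((C @ [0]) ! j))"
    proof (cases "j < length C")
      case True
      have "C ! (j - 1) < C ! j" using C(3) True j by (simp add: sorted_wrt_nth_less)
      thus ?thesis using True pos by (simp add: mixed_rise_rule_def nth_append)
    next
      case False
      hence "C ! (j - 1) = last C" "(C @ [0]) ! j = 0" using j' last_C by (auto simp: nth_append)
      thus ?thesis using pos C(4) A(2) by (simp add: mixed_rise_rule_def zero_enat_def)
    qed
    have "take j (C @ [0]) = take j C" using j' by simp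
    hence "count_list (take j (C @ [0])) 0 = 0"
      using C(2) by (auto simp: count_list_0_iff dest: in_set_takeD)
    moreover have "(C @ [0]) ! (j - 1) = C ! (j - 1)" "j < Suc (length C)"
      using j j' by (auto simp: nth_append)
    ultimately show ?thesis using lhs rhs zeros A(2) by auto
  qed
qed (use C(2) in simp_all)

lemma RISE_mix_Suc_move_left:
  assumes A: "count_list A 0 = l - 1" "1 \<le> l"
    and C: "C \<noteq> []" "0 \<notin> set C" "sorted_wrt (>) C"
      "subexc_letter v (hd C)" "subexc_letter v (last C)"
    and L: "A = [] \<or> last A = 0 \<or> (subexc_letter v (last A) \<longleftrightarrow> last A < hd C)"
    and R: "D = [] \<or> hd D = 0 \<or> last C < hd D"
  shows "RISE_mix v (Suc l) (A @ (C @ [0]) @ D) = RISE_mix v l (A @ (0 # C) @ D)"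
proof (rule RISE_mix_Suc_window[OF A])
  have "0 < hd C" using C by (metis gr0I hd_in_set)
  thus "mixed_rise_rule v (Suc l) (l - 1) (last A) (enat (hd (C @ [0])))
      = mixed_rise_rule v l (l - 1) (last A) (enat (hd (0 # C)))" if "A \<noteq> []"
    using L that A(2) C(1) by (auto simp: mixed_rise_rule_def zero_enat_def)
  fix j assume j: "1 \<le> j" "j \<le> length (C @ [0])"
  have zeros: "count_list (take j (0 # C)) 0 = 1"
    using C(2) j(1) by (cases j) (auto simp: count_list_0_iff dest: in_set_takeD)
  have last_C: "last C = C ! (length C - 1)" using C(1) by (simp add: last_conv_nth)
  show "mixed_rise_rule v (Suc l) (l - 1 + count_list (take j (C @ [0])) 0) ((C @ [0]) ! (j - 1))
          (if j < length (C @ [0]) then enat ((C @ [0]) ! j) else lt D 1)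
      = mixed_rise_rule v l (l - 1 + count_list (take j (0 # C)) 0) ((0 # C) ! (j - 1))
          (if j < length (0 # C) then enat ((0 # C) ! j) else lt D 1)"
  proof (cases "j = Suc (length C)")
    case True
    have "(0 # C) ! (j - 1) = last C" "(C @ [0]) ! (j - 1) = 0"
      "count_list (take j (C @ [0])) 0 = 1" using True C(1,2) last_C by auto
    moreover have "0 < last C" using C(1,2) by (metis gr0I last_in_set)
    ultimately show ?thesis using True zeros R C(5) A(2)
      by (auto simp: mixed_rise_rule_def lt_one zero_enat_def)
  next
    case False
    hence j': "j \<le> length C" using j by simp
    have "C ! (j - 1) \<in> set C" using j j' by simp
    hence pos: "0 < C ! (j - 1)" using C(2) by (metis gr0I)
    have lhs: "\<not> mixed_rise_rule v (Suc l) (l - 1) (C ! (j - 1)) (enat ((C @ [0]) ! j))"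
    proof (cases "j < length C")
      case True
      have "C ! j < C ! (j - 1)"
        using sorted_wrt_nth_less[OF C(3), of "j - 1" j] True j by simp
      thus ?thesis using True A(2) by (auto simp: mixed_rise_rule_def nth_append zero_enat_def)
    next
      case False
      hence "(C @ [0]) ! j = 0" using j' by (simp add: nth_append)
      thus ?thesis using pos A(2) by (simp add: mixed_rise_rule_def zero_enat_def)
    qed
    have rhs: "\<not> mixed_rise_rule v l l ((0 # C) ! (j - 1)) (enat ((0 # C) ! j))"
    proof (cases "j = 1")
      case False
      hence "C ! (j - 1) < C ! (j - 2)"
        using sorted_wrt_nth_less[OF C(3), of "j - 2" "j - 1"] j j' by simp
      moreover have "(0 # C) ! (j - 1) = C ! (j - 2)" "(0 # C) ! j = C ! (j - 1)"
        using False j by (auto simp: nth_Cons' numeral_2_eq_2)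
      ultimately show ?thesis using pos by (auto simp: mixed_rise_rule_def zero_enat_def)
    next
      case True
      have "0 < hd C" "\<not> exc_letter v (hd C)"
        using C(4) subexc_letter_not_exc by (auto simp: subexc_letter_def)
      thus ?thesis using True C(1) by (auto simp: mixed_rise_rule_def hd_conv_nth zero_enat_def)
    qed
    have "take j (C @ [0]) = take j C" using j' by simp
    hence "count_list (take j (C @ [0])) 0 = 0"
      using C(2) by (auto simp: count_list_0_iff dest: in_set_takeD)
    moreover have "(C @ [0]) ! (j - 1) = C ! (j - 1)" "j < Suc (length C)"
      using j j' by (auto simp: nth_append)
    ultimately show ?thesis using lhs rhs zeros A(2) by auto
  qed
qed (use C(2) in simp_all)

lemma RISE_eq_RISE_mix:
  assumes "distinct (Pos w)"
  shows "RISE w = RISE_mix v (Suc (length w)) w"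
proof -
  have "enat (w ! (i - 1)) \<le> lt w (Suc i) \<longleftrightarrow> mixed_rise v (Suc (length w)) w i"
    if i: "1 \<le> i" "i \<le> length w" for i
  proof -
    have take_i: "take i w = take (i - 1) w @ [w ! (i - 1)]"
      using i take_Suc_conv_app_nth[of "i - 1" w] by simp
    have le: "count_list (take i w) 0 \<le> length w" using count_le_length[of "take i w" 0] by simp
    have less: "0 < w ! (i - 1) \<Longrightarrow> count_list (take i w) 0 < length w"
      using count_le_length[of "take (i - 1) w" 0] i unfolding take_i by simp
    have neq: "w ! i \<noteq> w ! (i - 1)" if "i < length w" "0 < w ! (i - 1)"
    proof
      assume eq: "w ! i = w ! (i - 1)"
      have "w = take (i - 1) w @ w ! (i - 1) # w ! i # drop (Suc i) w"
        using that i id_take_nth_drop[of "i - 1" w] Cons_nth_drop_Suc[of i w] by simp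
      hence "Pos w = Pos (take (i - 1) w) @ w ! (i - 1) # w ! i # Pos (drop (Suc i) w)"
        using that eq by (metis Pos_Cons Pos_append)
      thus False using assms eq by simp
    qed
    show ?thesis
    proof (cases "w ! (i - 1) = 0")
      case True
      thus ?thesis using le by (simp add: mixed_rise_def mixed_rise_rule_def flip: zero_enat_def)
    next
      case False
      thus ?thesis using less neq
        by (cases "i < length w") (auto simp: mixed_rise_def mixed_rise_rule_def lt_Suc)
    qed
  qed
  moreover have "lt w i = enat (w ! (i - 1))" if "1 \<le> i" "i \<le> length w" for i
    using that by (simp add: lt_def)
  ultimately show ?thesis unfolding RISE_def RISE_mix_def by auto
qed

lemma RISEb_eq_RISE_mix:
  assumes "Pos w = v" "distinct v"
  shows "RISEb w = RISE_mix v 1 w"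
proof -
  have "((0 < lt w i \<and> lt w i < lt w (i + 1))
     \<or> (lt w i = 0 \<and> lt w (i + 1) = 0)
     \<or> (lt w i = 0 \<and> Exc w (i + 1))
     \<or> (Subexc w i \<and> lt w (i + 1) = 0)) \<longleftrightarrow> mixed_rise v 1 w i"
    if i: "1 \<le> i" "i \<le> length w" for i
  proof -
    have lt_i: "lt w i = enat (w ! (i - 1))" using i by (simp add: lt_def)
    have "take i w = take (i - 1) w @ [w ! (i - 1)]"
      using i take_Suc_conv_app_nth[of "i - 1" w] by simp
    hence "w ! (i - 1) = 0 \<Longrightarrow> 1 \<le> count_list (take i w) 0" by simp
    moreover have "Exc w (i + 1) \<longleftrightarrow> i = length w \<or> (i < length w \<and> exc_letter v (w ! i))"
      unfolding Exc_iff_exc_letter[OF assms] using i by auto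
    moreover have "Subexc w i \<longleftrightarrow> subexc_letter v (w ! (i - 1))"
      unfolding Subexc_iff_subexc_letter[OF assms] using i by auto
    ultimately show ?thesis unfolding lt_i using i
      by (cases "i < length w")
        (auto simp: mixed_rise_def lt_Suc mixed_rise_rule_def zero_enat_def
          subexc_letter_def exc_letter_def)
  qed
  thus ?thesis unfolding RISEb_def RISE_mix_def by auto
qed

section \<open>How the maps phi_l move a zero\<close>

lemma increasing_zero_notin:
  fixes C :: "nat list"
  assumes "0 < hd C" "sorted_wrt (<) C" "C \<noteq> []"
  shows "0 \<notin> set C"
  using assms by (cases C) auto

lemma decreasing_zero_notin:
  fixes C :: "nat list"
  assumes "0 < last C" "sorted_wrt (>) C" "C \<noteq> []"
  shows "0 \<notin> set C"
  using increasing_zero_notin[of "rev C"] assms by (simp add: hd_rev sorted_wrt_rev)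

lemma increasing_suffix_unique:
  fixes A1 A2 C1 C2 :: "nat list"
  assumes eq: "A1 @ C1 = A2 @ C2" and ne: "C1 \<noteq> []" "C2 \<noteq> []"
    and C1: "0 \<notin> set C1" "sorted_wrt (<) C1" "A1 = [] \<or> last A1 = 0 \<or> hd C1 \<le> last A1"
    and C2: "0 \<notin> set C2" "sorted_wrt (<) C2" "A2 = [] \<or> last A2 = 0 \<or> hd C2 \<le> last A2"
  shows "A1 = A2 \<and> C1 = C2"
proof -
  have no_overlap: "us = []"
    if "A = A' @ us" "us @ C = C'" "C \<noteq> []" "0 \<notin> set C'" "sorted_wrt (<) C'"
      "A = [] \<or> last A = 0 \<or> hd C \<le> last A" for A A' us C C' :: "nat list"
  proof (rule ccontr)
    assume us: "us \<noteq> []"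
    have "last us < hd C" using that(2,3,5) us by (auto simp: sorted_wrt_append)
    moreover have "0 < last us" using that(2,4) us by (metis Un_iff gr0I last_in_set set_append)
    ultimately show False using that(1,6) us by auto
  qed
  obtain us where "A1 = A2 @ us \<and> us @ C1 = C2 \<or> A1 @ us = A2 \<and> C1 = us @ C2"
    using eq by (auto simp: append_eq_append_conv2)
  thus ?thesis
  proof
    assume split: "A1 = A2 @ us \<and> us @ C1 = C2"
    hence "us = []" using no_overlap[of A1 A2 us C1 C2] ne(1) C2(1,2) C1(3) by blast
    thus ?thesis using split by simp
  next
    assume split: "A1 @ us = A2 \<and> C1 = us @ C2"
    hence "us = []" using no_overlap[of A2 A1 us C2 C1] ne(2) C1(1,2) C2(3) by blast
    thus ?thesis using split by simp
  qed
qed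

lemma decreasing_prefix_unique:
  fixes B1 B2 C1 C2 :: "nat list"
  assumes eq: "C1 @ B1 = C2 @ B2" and ne: "C1 \<noteq> []" "C2 \<noteq> []"
    and C1: "0 \<notin> set C1" "sorted_wrt (>) C1" "B1 = [] \<or> hd B1 = 0 \<or> last C1 < hd B1"
    and C2: "0 \<notin> set C2" "sorted_wrt (>) C2" "B2 = [] \<or> hd B2 = 0 \<or> last C2 < hd B2"
  shows "C1 = C2 \<and> B1 = B2"
proof -
  have "rev B1 @ rev C1 = rev B2 @ rev C2" using eq by (metis rev_append)
  moreover have "rev B = [] \<or> last (rev B) = 0 \<or> hd (rev C) \<le> last (rev B)"
    if "C \<noteq> []" "B = [] \<or> hd B = 0 \<or> last C < hd B" for B C :: "nat list"
    using that by (auto simp: last_rev hd_rev)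
  ultimately show ?thesis using increasing_suffix_unique[of "rev B1" "rev C1" "rev B2" "rev C2"] ne C1 C2
    by (simp add: sorted_wrt_rev)
qed

text \<open>The three ways in which \<open>\<phi>\<^sub>l\<close> turns \<open>u\<close> into \<open>X 0 Y\<close>, following cases (a), (b) and (c) of
  its definition. The conditions on \<open>X\<close> and \<open>Y\<close> alone tell the cases apart, and within each case
  they determine \<open>u\<close>; this is why \<open>\<phi>\<^sub>l\<close> is injective.\<close>

definition unmoved :: "nat list \<Rightarrow> nat list \<Rightarrow> nat list \<Rightarrow> nat list \<Rightarrow> bool" where
  "unmoved v u X Y \<longleftrightarrow> u = X @ 0 # Y \<and> \<not> subexc_last v X \<and> \<not> subexc_hd v Y"

definition moved_right :: "nat list \<Rightarrow> nat list \<Rightarrow> nat list \<Rightarrow> nat list \<Rightarrow> bool" where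
  "moved_right v u X Y \<longleftrightarrow> subexc_last v X \<and> (subexc_hd v Y \<longrightarrow> hd Y < last X)
     \<and> (\<exists>A C. X = A @ C \<and> u = A @ 0 # C @ Y \<and> C \<noteq> [] \<and> 0 \<notin> set C \<and> sorted_wrt (<) C
            \<and> (A = [] \<or> last A = 0 \<or> hd C \<le> last A))"

definition moved_left :: "nat list \<Rightarrow> nat list \<Rightarrow> nat list \<Rightarrow> nat list \<Rightarrow> bool" where
  "moved_left v u X Y \<longleftrightarrow> subexc_hd v Y \<and> (subexc_last v X \<longrightarrow> last X < hd Y)
     \<and> (\<exists>C B. Y = C @ B \<and> u = X @ C @ 0 # B \<and> C \<noteq> [] \<and> 0 \<notin> set C \<and> sorted_wrt (>) C
            \<and> subexc_letter v (last C) \<and> (B = [] \<or> hd B = 0 \<or> last C < hd B))"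

definition phi_source :: "nat list \<Rightarrow> nat list \<Rightarrow> nat list \<Rightarrow> nat list \<Rightarrow> bool" where
  "phi_source v u X Y \<longleftrightarrow> unmoved v u X Y \<or> moved_right v u X Y \<or> moved_left v u X Y"

lemma moved_right_unique: "moved_right v u1 X Y \<Longrightarrow> moved_right v u2 X Y \<Longrightarrow> u1 = u2"
  unfolding moved_right_def by (metis increasing_suffix_unique)

lemma moved_left_unique: "moved_left v u1 X Y \<Longrightarrow> moved_left v u2 X Y \<Longrightarrow> u1 = u2"
  unfolding moved_left_def by (metis decreasing_prefix_unique)

lemma phi_source_unique:
  assumes "phi_source v u1 X Y" "phi_source v u2 X Y"
  shows "u1 = u2"
proof -
  have "\<not> (moved_right v u X Y \<and> moved_left v u' X Y)" for u u'
    unfolding moved_right_def moved_left_def by auto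
  moreover have "\<not> (unmoved v u X Y \<and> moved_right v u' X Y)" "\<not> (unmoved v u X Y \<and> moved_left v u' X Y)"
    for u u' unfolding unmoved_def moved_right_def moved_left_def by auto
  ultimately show ?thesis
    using assms moved_right_unique moved_left_unique unfolding phi_source_def by (metis unmoved_def)
qed

lemma Sh_iff: "u \<in> Sh n m v \<longleftrightarrow> length u = n \<and> count_list u 0 = n - m \<and> Pos u = v"
  by (simp add: Sh_def count_list_zero_eq_length_filter)

lemma phi_source_Sh: "phi_source v u X Y \<Longrightarrow> u \<in> Sh n m v \<Longrightarrow> X @ 0 # Y \<in> Sh n m v"
  unfolding phi_source_def unmoved_def moved_right_def moved_left_def Sh_iff
  by (auto simp: count_list_0_iff)

lemma finite_Sh: "finite (Sh n m v)"
proof (rule finite_subset)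
  show "Sh n m v \<subseteq> {w. set w \<subseteq> insert 0 (set v) \<and> length w = n}"
    by (auto simp: Sh_def Pos_def)
  show "finite {w. set w \<subseteq> insert 0 (set v) \<and> length w = n}"
    by (rule finite_lists_length_eq) simp
qed

lemma foldr_image_subset_inj_on:
  assumes "\<And>l. f l ` S \<subseteq> S" "\<And>l. inj_on (f l) S"
  shows "foldr f ls ` S \<subseteq> S \<and> inj_on (foldr f ls) S"
proof (induction ls)
  case (Cons l ls)
  hence "inj_on (f l) (foldr f ls ` S)" using assms(2) inj_on_subset by blast
  thus ?case using Cons assms(1) comp_inj_on[of "foldr f ls" S "f l"]
    by (auto simp: image_subset_iff comp_def)
qed simp

section \<open>The maps phi_l\<close>

lemma zero_split_exists:
  "1 \<le> l \<Longrightarrow> l \<le> count_list u 0 \<Longrightarrow> \<exists>A B. u = A @ 0 # B \<and> count_list A 0 = l - 1"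
proof (induct u arbitrary: l)
  case (Cons x u)
  show ?case
  proof (cases "x = 0 \<and> l = 1")
    case True
    thus ?thesis by (intro exI[of _ "[]"] exI[of _ u]) auto
  next
    case False
    hence "1 \<le> (if x = 0 then l - 1 else l)" "(if x = 0 then l - 1 else l) \<le> count_list u 0"
      using Cons.prems by auto
    from Cons.hyps[OF this] obtain A B
      where "u = A @ 0 # B" "count_list A 0 = (if x = 0 then l - 1 else l) - 1" by blast
    thus ?thesis using Cons.prems False by (intro exI[of _ "x # A"] exI[of _ B]) auto
  qed
qed simp

lemma zero_split_unique:
  "X1 @ 0 # Y1 = X2 @ 0 # Y2 \<Longrightarrow> count_list X1 (0::nat) = count_list X2 0 \<Longrightarrow> X1 = X2 \<and> Y1 = Y2"
proof (induct X1 arbitrary: X2)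
  case Nil
  thus ?case by (cases X2) auto
next
  case (Cons x X1)
  thus ?case by (cases X2) (auto split: if_splits)
qed

lemma zpos_eq:
  assumes "u = A @ 0 # B" "count_list A 0 = l - 1" "1 \<le> l"
  shows "zpos u l = Suc (length A)"
proof -
  let ?P = "\<lambda>j. u ! (j - 1) = 0"
  have "length u + 1 = Suc (length A) + (1 + length B)" using assms(1) by simp
  hence upt: "[1..<length u + 1]
      = [1..<Suc (length A)] @ Suc (length A) # [Suc (Suc (length A))..<length u + 1]"
    using upt_add_eq_append[of 1 "Suc (length A)" "1 + length B"] upt_conv_Cons[of "Suc (length A)"]
    by (simp del: upt_Suc)
  have "map (\<lambda>j. u ! (j - 1)) [1..<Suc (length A)] = A"
    using assms(1) by (intro nth_equalityI) (auto simp: nth_append simp del: upt_Suc)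
  moreover have "length (filter ?P js) = count_list (map (\<lambda>j. u ! (j - 1)) js) 0" for js
    by (induct js) auto
  ultimately have "length (filter ?P [1..<Suc (length A)]) = count_list A 0" by simp
  moreover have "u ! length A = 0" using assms(1) by simp
  ultimately show ?thesis using upt assms(2,3) by (simp add: zpos_def nth_append)
qed

lemma xl_before_zero: "u = A @ 0 # B \<Longrightarrow> A \<noteq> [] \<Longrightarrow> xl u (length A) = last A"
  by (simp add: xl_def nth_append last_conv_nth)

lemma xl_after_zero: "u = A @ 0 # B \<Longrightarrow> B \<noteq> [] \<Longrightarrow> xl u (Suc (Suc (length A))) = hd B"
  by (simp add: xl_def nth_append hd_conv_nth)

lemma Subexc_before_zero:
  assumes "Pos u = v" "distinct v" "u = A @ 0 # B"
  shows "Subexc u (length A) \<longleftrightarrow> subexc_last v A"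
  using assms xl_before_zero[OF assms(3)]
  by (cases "A = []") (auto simp: Subexc_iff_subexc_letter subexc_last_def xl_def Suc_le_eq)

lemma Subexc_after_zero:
  assumes "Pos u = v" "distinct v" "u = A @ 0 # B"
  shows "Subexc u (Suc (Suc (length A))) \<longleftrightarrow> subexc_hd v B"
  using assms xl_after_zero[OF assms(3)]
  by (cases "B = []") (auto simp: Subexc_iff_subexc_letter subexc_hd_def xl_def Suc_le_eq)

locale deranged =
  fixes m :: nat and v :: "nat list"
  assumes derangement: "derangement m v"
begin

lemma distinct_v: "distinct v"
  using derangement by (simp add: derangement_def)

lemma positive_letter_cases:
  assumes "Pos u = v" "a \<in> set u" "0 < a"
  shows "subexc_letter v a \<or> exc_letter v a"
proof -
  have "a \<in> set v" using assms by (auto simp: Pos_def)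
  thus ?thesis by (rule derangement_letter_cases[OF derangement])
qed

lemma NonSub_iff_not_Subexc:
  assumes "Pos u = v" "1 \<le> p" "p \<le> length u"
  shows "NonSub u p \<longleftrightarrow> \<not> Subexc u p"
proof -
  have "u ! (p - 1) \<in> set u" using assms(2,3) by simp
  hence "0 < u ! (p - 1) \<Longrightarrow> subexc_letter v (u ! (p - 1)) \<or> exc_letter v (u ! (p - 1))"
    by (rule positive_letter_cases[OF assms(1)])
  thus ?thesis using assms subexc_letter_not_exc[of v "u ! (p - 1)"]
    by (auto simp: NonSub_def Exc_iff_exc_letter[OF assms(1) distinct_v]
        Subexc_iff_subexc_letter[OF assms(1) distinct_v] xl_def subexc_letter_def)
qed

lemma NonSub_before_zero:
  assumes "Pos u = v" "u = A @ 0 # B"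
  shows "NonSub u (length A) \<longleftrightarrow> \<not> subexc_last v A"
proof (cases "A = []")
  case False
  thus ?thesis using assms NonSub_iff_not_Subexc Subexc_before_zero[OF assms(1) distinct_v assms(2)]
    by (simp add: Suc_le_eq)
qed (simp add: NonSub_def Exc_def subexc_last_def)

lemma NonSub_after_zero:
  assumes "Pos u = v" "u = A @ 0 # B"
  shows "NonSub u (Suc (Suc (length A))) \<longleftrightarrow> \<not> subexc_hd v B"
proof (cases "B = []")
  case False
  hence "Suc (Suc (length A)) \<le> length u" using assms(2) by (simp add: Suc_le_eq)
  thus ?thesis using assms NonSub_iff_not_Subexc Subexc_after_zero[OF assms(1) distinct_v assms(2)]
    by simp
qed (use assms in \<open>simp add: NonSub_def Exc_def subexc_hd_def\<close>)

lemma phi_case_a: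
  assumes P: "Pos u = v" and u: "u = A @ 0 # B" and A: "count_list A 0 = l - 1" "1 \<le> l"
    and "\<not> subexc_last v A" "\<not> subexc_hd v B"
  shows "phi m l u = u"
proof -
  have "NonSub u (length A)" "NonSub u (Suc (Suc (length A)))"
    using assms(5,6) NonSub_before_zero[OF P u] NonSub_after_zero[OF P u] by auto
  thus ?thesis by (simp add: phi_def Let_def zpos_eq[OF u A])
qed

lemma phi_case_b_end:
  assumes P: "Pos u = v" and u: "u = A @ 0 # B" and A: "count_list A 0 = l - 1" "1 \<le> l"
    and l: "l \<le> length u - m"
    and SR: "subexc_hd v B" and SL: "subexc_last v A \<longrightarrow> hd B < last A"
  obtains k where "Suc (Suc (length A)) \<le> k" "k \<le> length u" "xl u k < red u k"
    "\<forall>t. Suc (Suc (length A)) \<le> t \<and> t < k \<longrightarrow> xl u t < xl u (t + 1)"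
    "Suc k \<le> length u \<Longrightarrow> xl u k < xl u (Suc k) \<Longrightarrow> \<not> xl u (Suc k) < red u (Suc k)"
    "phi m l u = take (length A) u @ drop (Suc (length A)) (take k u) @ [0] @ drop k u"
proof -
  let ?a = "length A"
  define Q where "Q k \<longleftrightarrow> Suc (Suc ?a) \<le> k \<and> k \<le> length u
    \<and> (\<forall>t. Suc (Suc ?a) \<le> t \<and> t < k \<longrightarrow> xl u t < xl u (t + 1)) \<and> xl u k < red u k" for k
  have "B \<noteq> []" using SR by (simp add: subexc_hd_def)
  hence "NonSub u ?a \<and> Subexc u (Suc (Suc ?a))
      \<or> Subexc u ?a \<and> Subexc u (Suc (Suc ?a)) \<and> xl u (Suc (Suc ?a)) < xl u ?a"
    using SL SR NonSub_before_zero[OF P u] Subexc_before_zero[OF P distinct_v u]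
      Subexc_after_zero[OF P distinct_v u] xl_before_zero[OF u] xl_after_zero[OF u]
    by (auto simp: subexc_last_def)
  moreover have "\<not> NonSub u (Suc (Suc ?a))" using SR NonSub_after_zero[OF P u] by simp
  ultimately have phi_u: "phi m l u
      = take ?a u @ drop (Suc ?a) (take (Greatest Q) u) @ [0] @ drop (Greatest Q) u"
    using A l unfolding phi_def Let_def zpos_eq[OF u A] Q_def by simp
  have "Q (Suc (Suc ?a))"
    using Subexc_after_zero[OF P distinct_v u] SR unfolding Q_def Subexc_def by auto
  moreover have "\<And>k. Q k \<Longrightarrow> k \<le> length u" unfolding Q_def by auto
  ultimately have "Q (Greatest Q)" "\<not> Q (Suc (Greatest Q))"
    using GreatestI_nat[of Q] Greatest_le_nat[of Q "Suc (Greatest Q)"] by auto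
  then obtain k where Q_k: "Q k" and not_Q: "\<not> Q (Suc k)"
    and "phi m l u = take ?a u @ drop (Suc ?a) (take k u) @ [0] @ drop k u"
    using phi_u by blast
  thus ?thesis
    using that[of k] unfolding Q_def by (auto simp: less_Suc_eq)
qed

lemma phi_case_b_run:
  assumes P: "Pos u = v" and u: "u = A @ 0 # B" and A: "count_list A 0 = l - 1" "1 \<le> l"
    and l: "l \<le> length u - m"
    and SR: "subexc_hd v B" and SL: "subexc_last v A \<longrightarrow> hd B < last A"
  shows "\<exists>C D. B = C @ D \<and> phi m l u = A @ C @ 0 # D \<and> C \<noteq> [] \<and> 0 \<notin> set C
     \<and> sorted_wrt (<) C \<and> subexc_letter v (last C)
     \<and> (D \<noteq> [] \<and> last C < hd D \<longrightarrow> \<not> subexc_letter v (hd D))"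
proof -
  let ?a = "length A"
  obtain k where k: "Suc (Suc ?a) \<le> k" "k \<le> length u" "xl u k < red u k"
    "\<forall>t. Suc (Suc ?a) \<le> t \<and> t < k \<longrightarrow> xl u t < xl u (t + 1)"
    and k_max: "Suc k \<le> length u \<Longrightarrow> xl u k < xl u (Suc k) \<Longrightarrow> \<not> xl u (Suc k) < red u (Suc k)"
    and phi_u: "phi m l u = take ?a u @ drop (Suc ?a) (take k u) @ [0] @ drop k u"
    using phi_case_b_end[OF assms] by blast
  have len_u: "length u = Suc (?a + length B)" using u by simp
  have xl_B: "xl u (Suc ?a + t) = B ! (t - 1)" if "1 \<le> t" for t
    using u that by (simp add: xl_def nth_append)
  define q where "q = k - Suc ?a"
  have q: "1 \<le> q" "q \<le> length B" "k = Suc ?a + q" using k(1,2) len_u by (simp_all add: q_def)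
  define C where "C = take q B"
  define D where "D = drop q B"
  have C: "C \<noteq> []" "length C = q" "\<And>t. t < q \<Longrightarrow> C ! t = B ! t" using q by (auto simp: C_def)
  have "B ! t < B ! Suc t" if "Suc t < q" for t
    using k(4) q(3) that xl_B[of "Suc t"] xl_B[of "Suc (Suc t)"] by (auto dest: spec[of _ "Suc ?a + Suc t"])
  hence sorted_C: "sorted_wrt (<) C" using C by (auto simp: sorted_wrt_iff_nth_Suc_transp)
  have "0 < hd C" using SR C by (simp add: C_def subexc_hd_def subexc_letter_def)
  hence C_pos: "0 \<notin> set C" using sorted_C C(1) by (rule increasing_zero_notin)
  have last_C: "last C = xl u k" "0 < last C"
    using C q xl_B[of q] by (simp add: last_conv_nth) (metis C(1) C_pos gr0I last_in_set)
  have "red u k = place v (last C)"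
    using red_eq_place[OF P distinct_v, of k] last_C q len_u by (simp add: xl_def)
  hence sub_C: "subexc_letter v (last C)" using k(3) last_C by (simp add: subexc_letter_def)
  have max: "\<not> subexc_letter v (hd D)" if D: "D \<noteq> []" "last C < hd D"
  proof
    assume sub_D: "subexc_letter v (hd D)"
    have "q < length B" "hd D = B ! q" using D(1) by (auto simp: D_def hd_drop_conv_nth)
    hence xl_D: "xl u (Suc k) = hd D" and "Suc k \<le> length u" using xl_B[of "Suc q"] q len_u by auto
    moreover have "red u (Suc k) = place v (hd D)"
      using red_eq_place[OF P distinct_v, of "Suc k"] xl_D sub_D \<open>Suc k \<le> length u\<close>
      by (simp add: xl_def subexc_letter_def)
    ultimately show False using k_max D(2) last_C sub_D by (simp add: subexc_letter_def)
  qed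
  have "phi m l u = A @ C @ 0 # D" unfolding phi_u q(3) using u by (simp add: C_def D_def)
  moreover have "B = C @ D" by (simp add: C_def D_def)
  ultimately show ?thesis using C(1) C_pos sorted_C sub_C max by blast
qed

lemma phi_case_c_start:
  assumes P: "Pos u = v" and u: "u = A @ 0 # B" and A: "count_list A 0 = l - 1" "1 \<le> l"
    and l: "l \<le> length u - m"
    and SL: "subexc_last v A" and SR: "subexc_hd v B \<longrightarrow> last A < hd B"
  obtains i where "1 \<le> i" "i \<le> length A" "xl u i < red u i"
    "\<forall>t. i \<le> t \<and> t < length A \<longrightarrow> xl u (t + 1) < xl u t"
    "2 \<le> i \<Longrightarrow> xl u i < xl u (i - 1) \<Longrightarrow> \<not> xl u (i - 1) < red u (i - 1)"
    "phi m l u = take (i - 1) u @ [0] @ drop (i - 1) (take (length A) u) @ drop (Suc (length A)) u"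
proof -
  let ?a = "length A"
  define Q where "Q i \<longleftrightarrow> 1 \<le> i \<and> i \<le> ?a \<and> xl u i < red u i
    \<and> (\<forall>t. i \<le> t \<and> t < ?a \<longrightarrow> xl u (t + 1) < xl u t)" for i
  have sub_a: "Subexc u ?a" using SL Subexc_before_zero[OF P distinct_v u] by simp
  have not_nonsub_a: "\<not> NonSub u ?a" using SL NonSub_before_zero[OF P u] by simp
  have phi_u: "phi m l u = take (Least Q - 1) u @ [0] @ drop (Least Q - 1) (take ?a u) @ drop (Suc ?a) u"
  proof (cases "subexc_hd v B")
    case True
    hence "Subexc u (Suc (Suc ?a))" "\<not> NonSub u (Suc (Suc ?a))" "xl u ?a < xl u (Suc (Suc ?a))"
      using SL SR Subexc_after_zero[OF P distinct_v u] NonSub_after_zero[OF P u]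
        xl_before_zero[OF u] xl_after_zero[OF u] by (auto simp: subexc_hd_def subexc_last_def)
    thus ?thesis using A l sub_a not_nonsub_a unfolding phi_def Let_def zpos_eq[OF u A] Q_def by simp
  next
    case False
    hence "\<not> Subexc u (Suc (Suc ?a))" "NonSub u (Suc (Suc ?a))"
      using Subexc_after_zero[OF P distinct_v u] NonSub_after_zero[OF P u] by auto
    thus ?thesis using A l sub_a not_nonsub_a unfolding phi_def Let_def zpos_eq[OF u A] Q_def by simp
  qed
  have "Q ?a" using sub_a unfolding Q_def Subexc_def by auto
  hence "Q (Least Q)" by (rule LeastI)
  moreover have "2 \<le> Least Q \<Longrightarrow> \<not> Q (Least Q - 1)" by (intro not_less_Least) simp
  ultimately obtain i where Q_i: "Q i" and not_Q: "2 \<le> i \<Longrightarrow> \<not> Q (i - 1)"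
    and phi_i: "phi m l u = take (i - 1) u @ [0] @ drop (i - 1) (take ?a u) @ drop (Suc ?a) u"
    using phi_u by blast
  have "\<not> xl u (i - 1) < red u (i - 1)" if i: "2 \<le> i" "xl u i < xl u (i - 1)"
  proof
    assume "xl u (i - 1) < red u (i - 1)"
    moreover have "xl u (t + 1) < xl u t" if "i - 1 \<le> t" "t < ?a" for t
      using Q_i i that unfolding Q_def by (cases "t = i - 1") auto
    ultimately have "Q (i - 1)" using Q_i i unfolding Q_def by auto
    thus False using not_Q i(1) by simp
  qed
  thus ?thesis using Q_i phi_i that[of i] unfolding Q_def by blast
qed

lemma phi_case_c_run:
  assumes P: "Pos u = v" and u: "u = A @ 0 # B" and A: "count_list A 0 = l - 1" "1 \<le> l"
    and l: "l \<le> length u - m"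
    and SL: "subexc_last v A" and SR: "subexc_hd v B \<longrightarrow> last A < hd B"
  shows "\<exists>A' C. A = A' @ C \<and> phi m l u = A' @ 0 # C @ B \<and> C \<noteq> [] \<and> 0 \<notin> set C
     \<and> sorted_wrt (>) C \<and> subexc_letter v (hd C)
     \<and> (A' \<noteq> [] \<and> hd C < last A' \<longrightarrow> \<not> subexc_letter v (last A'))"
proof -
  let ?a = "length A"
  obtain i where i: "1 \<le> i" "i \<le> ?a" "xl u i < red u i"
    "\<forall>t. i \<le> t \<and> t < ?a \<longrightarrow> xl u (t + 1) < xl u t"
    and i_min: "2 \<le> i \<Longrightarrow> xl u i < xl u (i - 1) \<Longrightarrow> \<not> xl u (i - 1) < red u (i - 1)"
    and phi_u: "phi m l u = take (i - 1) u @ [0] @ drop (i - 1) (take ?a u) @ drop (Suc ?a) u"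
    using phi_case_c_start[OF assms] by blast
  have len_u: "length u = Suc (?a + length B)" using u by simp
  have xl_A: "xl u t = A ! (t - 1)" if "1 \<le> t" "t \<le> ?a" for t
  proof -
    have "t - 1 < ?a" using that by simp
    thus ?thesis using u by (simp add: xl_def nth_append)
  qed
  define A' where "A' = take (i - 1) A"
  define C where "C = drop (i - 1) A"
  have C_len: "length C = ?a - i + 1" using i by (simp add: C_def)
  have C_nth: "C ! t = xl u (i + t)" if "t < length C" for t
    using that i xl_A[of "i + t"] C_len by (simp add: C_def)
  have C_ne: "C \<noteq> []" using C_len by auto
  have "C ! Suc t < C ! t" if "Suc t < length C" for t
    using i(4) that C_nth[of t] C_nth[of "Suc t"] C_len by (auto dest: spec[of _ "i + t"])
  hence sorted_C: "sorted_wrt (>) C" by (auto simp: sorted_wrt_iff_nth_Suc_transp)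
  have "last C = last A" using i by (simp add: C_def last_drop)
  hence "0 < last C" using SL by (simp add: subexc_last_def subexc_letter_def)
  hence C_pos: "0 \<notin> set C" using sorted_C C_ne by (rule decreasing_zero_notin)
  have hd_C: "hd C = xl u i" "0 < hd C"
    using C_nth[of 0] C_ne by (simp add: hd_conv_nth) (metis C_ne C_pos gr0I hd_in_set)
  have "red u i = place v (hd C)"
    using red_eq_place[OF P distinct_v, of i] i len_u hd_C by (simp add: xl_def)
  hence sub_C: "subexc_letter v (hd C)" using i(3) hd_C by (simp add: subexc_letter_def)
  have min: "\<not> subexc_letter v (last A')" if A': "A' \<noteq> []" "hd C < last A'"
  proof
    assume sub_A': "subexc_letter v (last A')"
    have i2: "2 \<le> i" using A' by (auto simp: A'_def)
    have xl_A': "xl u (i - 1) = last A'"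
      using A' i2 i xl_A[of "i - 1"] by (simp add: A'_def last_conv_nth)
    have "red u (i - 1) = place v (last A')"
      using red_eq_place[OF P distinct_v, of "i - 1"] i2 i len_u xl_A' sub_A'
      by (simp add: xl_def subexc_letter_def)
    thus False using i_min i2 A'(2) hd_C xl_A' sub_A' by (simp add: subexc_letter_def)
  qed
  have "phi m l u = A' @ 0 # C @ B" unfolding phi_u using u i by (simp add: A'_def C_def)
  moreover have "A = A' @ C" by (simp add: A'_def C_def)
  ultimately show ?thesis using C_ne C_pos sorted_C sub_C min by blast
qed

lemma place_across_zero:
  assumes "Pos u = v" "u = A @ 0 # B" "A \<noteq> []" "B \<noteq> []" "0 < last A" "0 < hd B"
  shows "place v (hd B) = Suc (place v (last A))"
  using assms place_hd_after_last[OF assms(1) distinct_v, of "[]" A "[0]" B "[]"] by simp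

lemma phi_case_b:
  assumes P: "Pos u = v" and u: "u = A @ 0 # B" and A: "count_list A 0 = l - 1" "1 \<le> l"
    and l: "l \<le> length u - m"
    and SR: "subexc_hd v B" and SL: "subexc_last v A \<longrightarrow> hd B < last A"
  shows "\<exists>X Y. phi m l u = X @ 0 # Y \<and> count_list X 0 = l - 1 \<and> moved_right v u X Y"
proof -
  obtain C D where CD: "B = C @ D" "phi m l u = A @ C @ 0 # D" "C \<noteq> []" "0 \<notin> set C"
    "sorted_wrt (<) C" "subexc_letter v (last C)"
    "D \<noteq> [] \<and> last C < hd D \<longrightarrow> \<not> subexc_letter v (hd D)"
    using phi_case_b_run[OF assms] by blast
  have hd_C: "hd C = hd B" "subexc_letter v (hd B)" using CD(1,3) SR by (auto simp: subexc_hd_def)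
  have left: "A = [] \<or> last A = 0 \<or> hd C \<le> last A"
  proof (cases "A = [] \<or> last A = 0")
    case False
    have A_pos: "last A \<in> set u" "0 < last A" using u False by auto
    hence cases: "subexc_letter v (last A) \<or> exc_letter v (last A)"
      by (rule positive_letter_cases[OF P])
    have "A \<noteq> []" "B \<noteq> []" "0 < hd B" using False CD(1,3) hd_C(2) by (auto simp: subexc_letter_def)
    hence places: "place v (hd B) = Suc (place v (last A))"
      using place_across_zero[OF P u] A_pos(2) by blast
    have "hd B < last A"
    proof (cases "subexc_last v A")
      case False
      hence "exc_letter v (last A)" using cases \<open>\<not> (A = [] \<or> last A = 0)\<close> by (simp add: subexc_last_def)
      thus ?thesis using exc_before_subexc[OF places _ hd_C(2)] by simp
    qed (use SL in simp)
    thus ?thesis using hd_C(1) by simp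
  qed blast
  have right: "hd D < last C" if "subexc_hd v D"
  proof -
    have D: "D \<noteq> []" "0 < hd D" and "0 < last C"
      using that CD(6) by (auto simp: subexc_hd_def subexc_letter_def)
    have "u = (A @ [0]) @ C @ [] @ D @ []" using u CD(1) by simp
    from place_hd_after_last[OF P distinct_v this CD(3) D(1) \<open>0 < last C\<close> D(2) Pos_Nil]
    have "place v (hd D) = Suc (place v (last C))" .
    hence "hd D \<noteq> last C" by (metis n_not_Suc_n)
    moreover have "\<not> last C < hd D" using CD(7) that by (auto simp: subexc_hd_def)
    ultimately show ?thesis by linarith
  qed
  have "moved_right v u (A @ C) D"
    unfolding moved_right_def using CD u left right by (auto simp: subexc_last_def)
  moreover have "count_list (A @ C) 0 = l - 1" using A CD(4) by simp
  ultimately show ?thesis using CD(2) by (intro exI[of _ "A @ C"] exI[of _ D]) simp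
qed

lemma phi_case_c:
  assumes P: "Pos u = v" and u: "u = A @ 0 # B" and A: "count_list A 0 = l - 1" "1 \<le> l"
    and l: "l \<le> length u - m"
    and SL: "subexc_last v A" and SR: "subexc_hd v B \<longrightarrow> last A < hd B"
  shows "\<exists>X Y. phi m l u = X @ 0 # Y \<and> count_list X 0 = l - 1 \<and> moved_left v u X Y"
proof -
  obtain A' C where AC: "A = A' @ C" "phi m l u = A' @ 0 # C @ B" "C \<noteq> []" "0 \<notin> set C"
    "sorted_wrt (>) C" "subexc_letter v (hd C)"
    "A' \<noteq> [] \<and> hd C < last A' \<longrightarrow> \<not> subexc_letter v (last A')"
    using phi_case_c_run[OF assms] by blast
  have last_C: "last C = last A" "subexc_letter v (last A)"
    using AC(1,3) SL by (auto simp: subexc_last_def)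
  have right: "B = [] \<or> hd B = 0 \<or> last C < hd B"
  proof (cases "B = [] \<or> hd B = 0")
    case False
    have B_pos: "hd B \<in> set u" "0 < hd B" using u False by auto
    hence cases: "subexc_letter v (hd B) \<or> exc_letter v (hd B)"
      by (rule positive_letter_cases[OF P])
    have "A \<noteq> []" "B \<noteq> []" "0 < last A" using False AC(1,3) last_C(2) by (auto simp: subexc_letter_def)
    hence places: "place v (hd B) = Suc (place v (last A))"
      using place_across_zero[OF P u] B_pos(2) by blast
    have "last A < hd B"
    proof (cases "subexc_hd v B")
      case False
      hence "exc_letter v (hd B)" using cases \<open>\<not> (B = [] \<or> hd B = 0)\<close> by (simp add: subexc_hd_def)
      thus ?thesis using subexc_before_exc[OF places last_C(2)] by simp
    qed (use SR in simp)
    thus ?thesis using last_C(1) by simp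
  qed blast
  have left: "last A' < hd C" if "subexc_last v A'"
  proof -
    have A': "A' \<noteq> []" "0 < last A'" and "0 < hd C"
      using that AC(6) by (auto simp: subexc_last_def subexc_letter_def)
    have "u = [] @ A' @ [] @ C @ 0 # B" using u AC(1) by simp
    from place_hd_after_last[OF P distinct_v this A'(1) AC(3) A'(2) \<open>0 < hd C\<close> Pos_Nil]
    have "place v (hd C) = Suc (place v (last A'))" .
    hence "hd C \<noteq> last A'" by (metis n_not_Suc_n)
    moreover have "\<not> hd C < last A'" using AC(7) that by (auto simp: subexc_last_def)
    ultimately show ?thesis by linarith
  qed
  have "moved_left v u A' (C @ B)"
    unfolding moved_left_def
  proof (intro conjI)
    show "subexc_hd v (C @ B)" using AC(3,6) by (simp add: subexc_hd_def)
    show "subexc_last v A' \<longrightarrow> last A' < hd (C @ B)" using left AC(3) by simp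
    show "\<exists>C' B'. C @ B = C' @ B' \<and> u = A' @ C' @ 0 # B' \<and> C' \<noteq> [] \<and> 0 \<notin> set C'
        \<and> sorted_wrt (>) C' \<and> subexc_letter v (last C') \<and> (B' = [] \<or> hd B' = 0 \<or> last C' < hd B')"
    proof (intro exI conjI)
      show "u = A' @ C @ 0 # B" using u AC(1) by simp
      show "subexc_letter v (last C)" using last_C by simp
    qed (use AC(3-5) right in auto)
  qed
  moreover have "count_list A' 0 = l - 1" using A AC(1,4) by simp
  ultimately show ?thesis using AC(2) by (intro exI[of _ A'] exI[of _ "C @ B"]) simp
qed

lemma phi_source_exists:
  assumes u: "u \<in> Sh n m v" and l: "1 \<le> l" "l \<le> n - m"
  shows "\<exists>X Y. phi m l u = X @ 0 # Y \<and> count_list X 0 = l - 1 \<and> phi_source v u X Y"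
proof -
  have P: "Pos u = v" and l': "l \<le> length u - m" and "l \<le> count_list u 0"
    using u l by (auto simp: Sh_iff)
  then obtain A B where AB: "u = A @ 0 # B" "count_list A 0 = l - 1"
    using zero_split_exists[OF l(1)] by blast
  have "last A \<noteq> hd B" if "subexc_last v A" "subexc_hd v B"
    using place_across_zero[OF P AB(1)] that by (auto simp: subexc_last_def subexc_hd_def subexc_letter_def)
  then consider "\<not> subexc_last v A" "\<not> subexc_hd v B"
    | "subexc_hd v B" "subexc_last v A \<longrightarrow> hd B < last A"
    | "subexc_last v A" "subexc_hd v B \<longrightarrow> last A < hd B"
    by (meson nat_neq_iff)
  thus ?thesis
  proof cases
    case 1
    hence "phi m l u = u" "unmoved v u A B" using phi_case_a[OF P AB l(1)] AB by (auto simp: unmoved_def)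
    thus ?thesis using AB by (auto simp: phi_source_def)
  next
    case 2
    thus ?thesis using phi_case_b[OF P AB l(1) l'] by (auto simp: phi_source_def)
  next
    case 3
    thus ?thesis using phi_case_c[OF P AB l(1) l'] by (auto simp: phi_source_def)
  qed
qed

lemma RISE_mix_Suc_unmoved:
  assumes P: "Pos u = v" and X: "count_list X 0 = l - 1" "1 \<le> l" and src: "unmoved v u X Y"
  shows "RISE_mix v (Suc l) u = RISE_mix v l (X @ 0 # Y)"
proof -
  have u: "u = X @ [0] @ Y" and "\<not> subexc_last v X" "\<not> subexc_hd v Y"
    using src by (auto simp: unmoved_def)
  moreover have "Y = [] \<or> hd Y = 0 \<or> exc_letter v (hd Y)"
  proof (cases "Y = [] \<or> hd Y = 0")
    case False
    hence "hd Y \<in> set u" "0 < hd Y" using u by auto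
    hence "subexc_letter v (hd Y) \<or> exc_letter v (hd Y)" by (rule positive_letter_cases[OF P])
    thus ?thesis using \<open>\<not> subexc_hd v Y\<close> False by (auto simp: subexc_hd_def)
  qed blast
  ultimately show ?thesis using RISE_mix_Suc_fixed_zero[OF X] by simp
qed

lemma RISE_mix_Suc_moved_right:
  assumes P: "Pos u = v" and X: "count_list X 0 = l - 1" "1 \<le> l" and moved: "moved_right v u X Y"
  shows "RISE_mix v (Suc l) u = RISE_mix v l (X @ 0 # Y)"
proof -
  obtain A C where AC: "X = A @ C" "u = A @ 0 # C @ Y" "C \<noteq> []" "0 \<notin> set C"
    "sorted_wrt (<) C" "A = [] \<or> last A = 0 \<or> hd C \<le> last A"
    using moved unfolding moved_right_def by blast
  have sub: "subexc_letter v (last C)" "subexc_hd v Y \<longrightarrow> hd Y < last C"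
    using moved AC(1,3) unfolding moved_right_def subexc_last_def by auto
  have "Y = [] \<or> hd Y = 0 \<or> (last C < hd Y \<longleftrightarrow> exc_letter v (hd Y))"
  proof (cases "Y = [] \<or> hd Y = 0")
    case False
    have Y: "Y \<noteq> []" "0 < hd Y" and "0 < last C" using False sub(1) by (auto simp: subexc_letter_def)
    have "u = (A @ [0]) @ C @ [] @ Y @ []" using AC(2) by simp
    from place_hd_after_last[OF P distinct_v this AC(3) Y(1) \<open>0 < last C\<close> Y(2) Pos_Nil]
    have places: "place v (hd Y) = Suc (place v (last C))" .
    have "hd Y \<in> set u" "0 < hd Y" using AC(2) False by auto
    hence "subexc_letter v (hd Y) \<or> exc_letter v (hd Y)" by (rule positive_letter_cases[OF P])
    moreover have "exc_letter v (hd Y) \<Longrightarrow> last C < hd Y" by (rule subexc_before_exc[OF places sub(1)])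
    ultimately show ?thesis using False sub(2) subexc_letter_not_exc by (auto simp: subexc_hd_def)
  qed blast
  moreover have "count_list A 0 = l - 1" using X(1) AC(1,4) by simp
  ultimately show ?thesis using RISE_mix_Suc_move_right[of A l C v Y] AC X(2) sub(1) by simp
qed

lemma RISE_mix_Suc_moved_left:
  assumes P: "Pos u = v" and X: "count_list X 0 = l - 1" "1 \<le> l" and moved: "moved_left v u X Y"
  shows "RISE_mix v (Suc l) u = RISE_mix v l (X @ 0 # Y)"
proof -
  obtain C B where CB: "Y = C @ B" "u = X @ C @ 0 # B" "C \<noteq> []" "0 \<notin> set C"
    "sorted_wrt (>) C" "subexc_letter v (last C)" "B = [] \<or> hd B = 0 \<or> last C < hd B"
    using moved unfolding moved_left_def by blast
  have sub: "subexc_letter v (hd C)" "subexc_last v X \<longrightarrow> last X < hd C"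
    using moved CB(1,3) unfolding moved_left_def subexc_hd_def by auto
  have "X = [] \<or> last X = 0 \<or> (subexc_letter v (last X) \<longleftrightarrow> last X < hd C)"
  proof (cases "X = [] \<or> last X = 0")
    case False
    have X: "X \<noteq> []" "0 < last X" and "0 < hd C" using False sub(1) by (auto simp: subexc_letter_def)
    have "u = [] @ X @ [] @ C @ 0 # B" using CB(2) by simp
    from place_hd_after_last[OF P distinct_v this X(1) CB(3) X(2) \<open>0 < hd C\<close> Pos_Nil]
    have places: "place v (hd C) = Suc (place v (last X))" .
    have "last X \<in> set u" "0 < last X" using CB(2) False by auto
    hence "subexc_letter v (last X) \<or> exc_letter v (last X)" by (rule positive_letter_cases[OF P])
    moreover have "exc_letter v (last X) \<Longrightarrow> hd C < last X" by (rule exc_before_subexc[OF places _ sub(1)])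
    ultimately show ?thesis using False sub(2) by (auto simp: subexc_last_def)
  qed blast
  thus ?thesis using RISE_mix_Suc_move_left[of X l C v B] CB X sub(1) by simp
qed

lemma RISE_mix_Suc_phi_source:
  assumes "Pos u = v" "count_list X 0 = l - 1" "1 \<le> l" "phi_source v u X Y"
  shows "RISE_mix v (Suc l) u = RISE_mix v l (X @ 0 # Y)"
  using assms RISE_mix_Suc_unmoved RISE_mix_Suc_moved_right RISE_mix_Suc_moved_left
  unfolding phi_source_def by blast

lemma phi_in_Sh:
  assumes "u \<in> Sh n m v"
  shows "phi m l u \<in> Sh n m v"
proof (cases "1 \<le> l \<and> l \<le> n - m")
  case True
  then obtain X Y where "phi m l u = X @ 0 # Y" "phi_source v u X Y"
    using phi_source_exists[OF assms] by blast
  thus ?thesis using phi_source_Sh assms by simp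
next
  case False
  thus ?thesis using assms by (auto simp: phi_def Sh_iff)
qed

lemma RISE_mix_phi:
  assumes u: "u \<in> Sh n m v" and l: "1 \<le> l"
  shows "RISE_mix v l (phi m l u) = RISE_mix v (Suc l) u"
proof (cases "l \<le> n - m")
  case True
  then obtain X Y where "phi m l u = X @ 0 # Y" "count_list X 0 = l - 1" "phi_source v u X Y"
    using phi_source_exists[OF u l] by blast
  thus ?thesis using RISE_mix_Suc_phi_source u l by (simp add: Sh_iff)
next
  case False
  thus ?thesis using u RISE_mix_Suc_beyond_zeros[of u l v] by (simp add: phi_def Sh_iff)
qed

lemma inj_on_phi: "inj_on (phi m l) (Sh n m v)"
proof (cases "1 \<le> l \<and> l \<le> n - m")
  case True
  show ?thesis
  proof (rule inj_onI)
    fix u1 u2 assume u: "u1 \<in> Sh n m v" "u2 \<in> Sh n m v" and eq: "phi m l u1 = phi m l u2"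
    obtain X1 Y1 where 1: "phi m l u1 = X1 @ 0 # Y1" "count_list X1 0 = l - 1" "phi_source v u1 X1 Y1"
      using phi_source_exists[OF u(1)] True by blast
    obtain X2 Y2 where 2: "phi m l u2 = X2 @ 0 # Y2" "count_list X2 0 = l - 1" "phi_source v u2 X2 Y2"
      using phi_source_exists[OF u(2)] True by blast
    have "X1 = X2 \<and> Y1 = Y2" using zero_split_unique[of X1 Y1 X2 Y2] 1 2 eq by simp
    thus "u1 = u2" using phi_source_unique 1(3) 2(3) by blast
  qed
next
  case False
  thus ?thesis by (auto simp: inj_on_def phi_def Sh_iff)
qed

lemma RISE_mix_foldr_phi:
  assumes u: "u \<in> Sh n m v" and k: "1 \<le> k" "k \<le> Suc n"
  shows "RISE_mix v k (foldr (phi m) [k..<Suc n] u) = RISE_mix v (Suc n) u"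
  using k(2)
proof (induction rule: inc_induct)
  case (step i)
  have "foldr (phi m) [Suc i..<Suc n] u \<in> Sh n m v"
    using foldr_image_subset_inj_on[of "phi m" "Sh n m v"] phi_in_Sh inj_on_phi u by blast
  thus ?case using step k(1) RISE_mix_phi upt_conv_Cons[OF step.hyps(2)] by simp
qed simp

end

theorem theorem1p1:
  fixes m n :: nat and v :: "nat list"
  assumes "derangement m v" and "m \<le> n"
  shows "bij_betw (Phi n m) (Sh n m v) (Sh n m v)
         \<and> (\<forall>w \<in> Sh n m v. RISE w = RISEb (Phi n m w))"
proof -
  interpret deranged m v by unfold_locales (rule assms(1))
  let ?S = "Sh n m v"
  have Phi: "Phi n m = foldr (phi m) [1..<Suc n]" by (simp add: Phi_def fun_eq_iff)
  have maps: "Phi n m ` ?S \<subseteq> ?S" and inj: "inj_on (Phi n m) ?S"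
    unfolding Phi using foldr_image_subset_inj_on[of "phi m" ?S] phi_in_Sh inj_on_phi by blast+
  have "bij_betw (Phi n m) ?S ?S" using endo_inj_surj[OF finite_Sh maps inj] inj by (simp add: bij_betw_def)
  moreover have "RISE w = RISEb (Phi n m w)" if w: "w \<in> ?S" for w
  proof -
    have "Phi n m w \<in> ?S" using maps w by blast
    hence "Pos (Phi n m w) = v" by (simp add: Sh_iff)
    hence "RISEb (Phi n m w) = RISE_mix v 1 (Phi n m w)" by (rule RISEb_eq_RISE_mix[OF _ distinct_v])
    also have "\<dots> = RISE_mix v (Suc n) w" using RISE_mix_foldr_phi[OF w, of 1] Phi by simp
    also have "\<dots> = RISE w" using RISE_eq_RISE_mix[of w v] w distinct_v by (simp add: Sh_iff)
    finally show ?thesis by simp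
  qed
  ultimately show ?thesis by blast
qed

end
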